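(* Let $d\ge 5$, let $q_1,\ldots,q_d$ be nonzero real numbers with $|q_i|\ge e^e$, and let $P$ be the parameter defined below. Let $\psi$ be a smooth symmetric probability density on $\mathbb{R}$ supported in $[-1,1]$, and let $K = \widehat{\psi}$ be its (real-valued, symmetric) Fourier transform. Suppose that the inequality $|q_1 m_1^2 + \cdots + q_d m_d^2| < 1$ has no solution in integers $m_1,\ldots,m_d$, not all zero, satisfying $|q_1| m_1^2 + \cdots + |q_d| m_d^2 \le 4 d^3 P^2$. Then $$\operatorname{Re} \int_0^\infty S_1(\alpha)\cdots S_d(\alpha) K(\alpha)\, \mathrm{d}\alpha = 0.$$
   Context: Notation: $e(x) = \exp(2\pi i x)$; $\widehat{\psi}(\alpha) = \int_{\mathbb{R}} \psi(x) e(-\alpha x)\,\mathrm{d}x$. For $j=1,\ldots,d$, $S_j(\alpha) = \sum_{m \in \mathbb{Z},\ P < |q_j|^{1/2} m < 2dP} e(\alpha q_j m^2)$. The parameter $P$ is $P = \exp\{(1 + \tfrac{10 d^2}{\log\log H})\log H\}$ with $H = C_d\, q^{\frac12 + \beta}$, where $q = \max_j |q_j|$, $C_d \ge 1$ is a constant depending on $d$, and $\beta$ is the exponent attached to the signature $(r,s)$ of $(q_1,\ldots,q_d)$ ($r$ positive, $s$ negative entries, $r,s\ge1$): with $r'=\max(r,s)$, $s'=\min(r,s)$, $\beta = \frac{r'}{2s'}$ if $r'\ge s'+3$, $\beta=\frac{s'+2}{2(s'-1)}$ if $r'\in\{s'+1,s'+2\}$, $\beta = \frac{s'+1}{2(s'-2)}$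 if $r'=s'$. *)

theory Defs
  imports "HOL-Analysis.Analysis"
begin

definition ee :: "real \<Rightarrow> complex" where
  "ee x = exp (2 * of_real pi * \<i> * of_real x)"

definition fourier :: "(real \<Rightarrow> real) \<Rightarrow> real \<Rightarrow> complex" where
  "fourier \<psi> \<alpha> = (LINT x|lborel. of_real (\<psi> x) * ee (- \<alpha> * x))"

definition smooth_fun :: "(real \<Rightarrow> real) \<Rightarrow> bool" where
  "smooth_fun f \<longleftrightarrow> (\<forall>n x. ((deriv ^^ n) f) differentiable (at x))"

definition S_sum :: "nat \<Rightarrow> real \<Rightarrow> real \<Rightarrow> real \<Rightarrow> complex" where
  "S_sum d P qj \<alpha> =
     (\<Sum>m\<in>{m::int. P < sqrt \<bar>qj\<bar> * of_int m \<and> sqrt \<bar>qj\<bar> * of_int m < 2 * real d * P}.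
        ee (\<alpha> * qj * (of_int m)^2))"

definition npos :: "nat \<Rightarrow> (nat \<Rightarrow> real) \<Rightarrow> nat" where
  "npos d q = card {j\<in>{1..d}. q j > 0}"
definition nneg :: "nat \<Rightarrow> (nat \<Rightarrow> real) \<Rightarrow> nat" where
  "nneg d q = card {j\<in>{1..d}. q j < 0}"

definition beta_exp :: "nat \<Rightarrow> nat \<Rightarrow> real" where
  "beta_exp r s = (let r' = max r s; s' = min r s in
     if r' \<ge> s' + 3 then real r' / (2 * real s')
     else if r' = s' + 1 \<or> r' = s' + 2 then (real s' + 2) / (2 * (real s' - 1))
     else (real s' + 1) / (2 * (real s' - 2)))"

definition qmax :: "nat \<Rightarrow> (nat \<Rightarrow> real) \<Rightarrow> real" where
  "qmax d q = Max ((\<lambda>j. \<bar>q j\<bar>) ` {1..d})"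

definition H_par :: "nat \<Rightarrow> real \<Rightarrow> (nat \<Rightarrow> real) \<Rightarrow> real" where
  "H_par d C q = C * qmax d q powr (1/2 + beta_exp (npos d q) (nneg d q))"

definition P_par :: "nat \<Rightarrow> real \<Rightarrow> (nat \<Rightarrow> real) \<Rightarrow> real" where
  "P_par d C q = (let H = H_par d C q in
     exp ((1 + 10 * (real d)^2 / ln (ln H)) * ln H))"

end

theory Submission
  imports Defs
begin

(* Expanding the product, Re (S_1 ... S_d K) is a finite sum over the lattice points m of
   Re (e (alpha Q) K alpha) with Q = Q(m) = q_1 m_1^2 + ... + q_d m_d^2, and the hypothesis
   forces |Q| >= 1 for every such m.  Formally the integral of this term over [0, oo) is
   psi(Q)/2 = 0.  Instead of Fourier inversion we use Cesaro means: by Fubini the mean over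
   [0, T] is the integral of psi(x) F_T(Q - x), where the Fejer kernel satisfies
   F_T(y) <= 1 / (2 pi^2 T y^2); and psi(x) <= L (Q - x)^2 because psi is smooth, nonnegative
   and vanishes at the boundary of its support.  Hence the means are O(1/T), and dominated
   convergence shows that the integral over [0, oo), whenever it exists, is 0. *)

lemma smooth_fun_DERIV:
  assumes "smooth_fun f"
  shows "DERIV ((deriv ^^ n) f) x :> (deriv ^^ Suc n) f x"
  using assms by (simp add: smooth_fun_def DERIV_deriv_iff_real_differentiable)

lemma smooth_fun_isCont: "smooth_fun f \<Longrightarrow> isCont ((deriv ^^ n) f) x"
  using smooth_fun_DERIV DERIV_isCont by blast

lemma smooth_fun_borel_measurable: "smooth_fun f \<Longrightarrow> f \<in> borel_measurable borel"
  using smooth_fun_isCont[where n=0]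
  by (intro borel_measurable_continuous_onI continuous_at_imp_continuous_on) auto

lemma isCont_vanishing_right_imp_zero:
  fixes f :: "real \<Rightarrow> real"
  assumes "isCont f a" and "\<And>x. x > a \<Longrightarrow> f x = 0"
  shows "f a = 0"
proof -
  have "(f \<longlongrightarrow> f a) (at_right a)"
    using assms(1) unfolding isCont_def by (rule tendsto_within_subset) simp
  moreover have "eventually (\<lambda>x. f x = 0) (at_right a)"
    by (rule eventually_mono[OF eventually_at_right_less]) (rule assms(2))
  ultimately have "((\<lambda>_. 0) \<longlongrightarrow> f a) (at_right a)"
    by (rule Lim_transform_eventually)
  then show ?thesis
    using tendsto_unique[OF trivial_limit_at_right_real _ tendsto_const] by metis
qed

lemma nonneg_smooth_le_quadratic_at_root:
  fixes f :: "real \<Rightarrow> real"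
  assumes sm: "smooth_fun f" and nonneg: "\<And>x. f x \<ge> 0" and zero: "f a = 0"
    and a: "a \<in> {b..c}"
  obtains L where "\<And>x. x \<in> {b..c} \<Longrightarrow> f x \<le> L * (x - a)^2"
proof -
  have deriv_zero: "deriv f a = 0"
  proof (rule DERIV_local_min)
    show "DERIV f a :> deriv f a" using smooth_fun_DERIV[OF sm, of 0] by simp
    show "\<forall>y. \<bar>a - y\<bar> < 1 \<longrightarrow> f a \<le> f y" using zero nonneg by simp
  qed simp
  have "continuous_on {b..c} ((deriv ^^ 2) f)"
    using smooth_fun_isCont[OF sm] by (simp add: continuous_at_imp_continuous_on)
  then have "bounded ((deriv ^^ 2) f ` {b..c})"
    by (intro compact_imp_bounded compact_continuous_image) auto
  then obtain M where M: "\<forall>t\<in>{b..c}. \<bar>(deriv ^^ 2) f t\<bar> \<le> M"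
    unfolding bounded_iff by auto
  have "f x \<le> M / 2 * (x - a)^2" if x: "x \<in> {b..c}" for x
  proof (cases "x = a")
    case False
    obtain t where t: "if x < a then x < t \<and> t < a else a < t \<and> t < x"
      and taylor: "f x = (\<Sum>m<2. (deriv ^^ m) f a / fact m * (x - a)^m)
                       + (deriv ^^ 2) f t / fact 2 * (x - a)^2"
      using Taylor[of 2 "\<lambda>m. (deriv ^^ m) f" f b c a x] smooth_fun_DERIV[OF sm] a x False
      by auto
    have "t \<in> {b..c}" using t a x by (auto split: if_splits)
    have "f x = (deriv ^^ 2) f t / 2 * (x - a)^2"
      using taylor zero deriv_zero by (simp add: numeral_2_eq_2)
    also have "\<dots> \<le> M / 2 * (x - a)^2"
      using M \<open>t \<in> {b..c}\<close> by (intro mult_right_mono) (auto dest: abs_le_D1)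
    finally show ?thesis .
  qed (use zero in simp)
  then show ?thesis using that by blast
qed

lemma smooth_bump_le_quadratic:
  fixes \<psi> :: "real \<Rightarrow> real"
  assumes sm: "smooth_fun \<psi>" and sym: "\<And>x. \<psi> (- x) = \<psi> x" and nonneg: "\<And>x. \<psi> x \<ge> 0"
    and supp: "\<And>x. \<bar>x\<bar> > 1 \<Longrightarrow> \<psi> x = 0"
  obtains L where "\<And>Q x. \<bar>Q\<bar> \<ge> 1 \<Longrightarrow> \<bar>\<psi> x\<bar> \<le> L * (Q - x)^2"
proof -
  have "\<psi> 1 = 0"
    using isCont_vanishing_right_imp_zero[where f=\<psi> and a=1]
      smooth_fun_isCont[OF sm, where n=0 and x=1] supp
    by simp
  then obtain L where L: "\<And>x. x \<in> {-1..1} \<Longrightarrow> \<psi> x \<le> L * (x - 1)^2"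
    using nonneg_smooth_le_quadratic_at_root[OF sm nonneg, of 1 "-1" 1] by auto
  have "L \<ge> 0" using L[of 0] nonneg[of 0] by simp
  have quadratic: "\<psi> x \<le> L * (Q - x)^2" if Q: "\<bar>Q\<bar> \<ge> 1" for Q x
  proof (cases "x \<in> {-1..1}")
    case True
    show ?thesis
    proof (cases "Q \<ge> 1")
      case True
      have "\<psi> x \<le> L * (1 - x)^2" using L[OF \<open>x \<in> {-1..1}\<close>] by (simp add: power2_commute)
      also have "\<dots> \<le> L * (Q - x)^2"
        using \<open>L \<ge> 0\<close> True \<open>x \<in> {-1..1}\<close> by (intro mult_left_mono power_mono) auto
      finally show ?thesis .
    next
      case False
      have "\<psi> x \<le> L * (x + 1)^2"
        using L[of "-x"] sym[of x] \<open>x \<in> {-1..1}\<close> by (simp add: power2_commute add.commute)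
      also have "\<dots> \<le> L * (Q - x)^2"
      proof (rule mult_left_mono[OF _ \<open>L \<ge> 0\<close>])
        have "(x + 1)^2 \<le> (x - Q)^2" using Q False \<open>x \<in> {-1..1}\<close> by (intro power_mono) auto
        then show "(x + 1)^2 \<le> (Q - x)^2" by (simp add: power2_commute)
      qed
      finally show ?thesis .
    qed
  qed (use supp \<open>L \<ge> 0\<close> in auto)
  show ?thesis
  proof (rule that)
    show "\<bar>\<psi> x\<bar> \<le> L * (Q - x)^2" if "\<bar>Q\<bar> \<ge> 1" for Q x
      using quadratic[OF that] nonneg[of x] by simp
  qed
qed

lemma ee_cis: "ee t = cis (2 * pi * t)"
  by (simp add: ee_def cis_conv_exp mult_ac)

lemma ee_add: "ee a * ee b = ee (a + b)"
  by (simp add: ee_cis cis_mult distrib_left)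

lemma prod_ee: "finite I \<Longrightarrow> (\<Prod>i\<in>I. ee (f i)) = ee (\<Sum>i\<in>I. f i)"
  by (induction I rule: finite_induct) (auto simp: ee_add, simp add: ee_def)

lemma borel_measurable_ee [measurable]: "ee \<in> borel_measurable borel"
  unfolding ee_def by (intro borel_measurable_continuous_onI continuous_intros)

definition cos_conv :: "(real \<Rightarrow> real) \<Rightarrow> real \<Rightarrow> real \<Rightarrow> real" where
  "cos_conv \<psi> Q a = (LINT x|lborel. \<psi> x * cos (2 * pi * a * (Q - x)))"

lemma Re_ee_mult_fourier:
  fixes \<psi> :: "real \<Rightarrow> real"
  assumes [measurable]: "\<psi> \<in> borel_measurable borel" and "integrable lborel \<psi>"
  shows "Re (ee (a * Q) * fourier \<psi> a) = cos_conv \<psi> Q a"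
proof -
  have integrable: "integrable lborel (\<lambda>x. of_real (\<psi> x) * ee (a * (Q - x)))"
    by (rule Bochner_Integration.integrable_bound[OF assms(2)])
      (measurable, simp add: ee_cis norm_mult)
  have "ee (a * Q) * fourier \<psi> a = (LINT x|lborel. ee (a * Q) * (of_real (\<psi> x) * ee (- a * x)))"
    unfolding fourier_def by simp
  also have "\<dots> = (LINT x|lborel. of_real (\<psi> x) * ee (a * (Q - x)))"
    by (intro Bochner_Integration.integral_cong refl)
      (simp add: mult.left_commute ee_add right_diff_distrib)
  finally have "Re (ee (a * Q) * fourier \<psi> a) = (LINT x|lborel. Re (of_real (\<psi> x) * ee (a * (Q - x))))"
    using integral_Re[OF integrable] by simp
  then show ?thesis
    by (simp add: cos_conv_def ee_cis mult_ac)
qed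

definition cesaro_weight :: "real \<Rightarrow> real \<Rightarrow> real" where
  "cesaro_weight T a = indicator {0..T} a * (1 - a / T)"

lemma borel_measurable_cesaro_weight [measurable]: "cesaro_weight T \<in> borel_measurable borel"
  unfolding cesaro_weight_def by measurable

lemma abs_cesaro_weight_le: "\<bar>cesaro_weight T a\<bar> \<le> indicator {0..T} a"
proof (cases "a \<in> {0..T}")
  case True
  then have "0 \<le> a / T" "a / T \<le> 1" by (auto simp: divide_le_eq_1)
  then show ?thesis using True by (simp add: cesaro_weight_def)
qed (simp add: cesaro_weight_def)

lemma cesaro_weight_tendsto:
  "(\<lambda>n. cesaro_weight (real (Suc n)) a) \<longlonglongrightarrow> indicator {0..} a"
proof (cases "a \<ge> 0")
  case True
  obtain N :: nat where "a \<le> real N" using real_arch_simple by blast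
  then have "eventually (\<lambda>n. cesaro_weight (real (Suc n)) a = 1 - a * inverse (real (Suc n)))
      sequentially"
    unfolding eventually_sequentially
    using True by (intro exI[of _ N]) (auto simp: cesaro_weight_def divide_inverse)
  moreover have "(\<lambda>n. 1 - a * inverse (real (Suc n))) \<longlonglongrightarrow> 1 - a * 0"
    by (intro tendsto_intros LIMSEQ_inverse_real_of_nat)
  ultimately show ?thesis using True by (simp add: tendsto_cong)
qed (simp add: cesaro_weight_def)

text \<open>One half of the Fejer kernel \<open>T (sin (pi T y) / (pi T y))\<^sup>2\<close>.\<close>
definition fejer_kernel :: "real \<Rightarrow> real \<Rightarrow> real" where
  "fejer_kernel T y = (LINT a|lborel. cesaro_weight T a * cos (2 * pi * a * y))"

lemma fejer_kernel_eq:
  assumes T: "T > 0" and y: "y \<noteq> 0"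
  shows "fejer_kernel T y = (1 - cos (2 * pi * y * T)) / (T * (2 * pi * y)^2)"
proof -
  define c where "c = 2 * pi * y"
  have "c \<noteq> 0" using y by (simp add: c_def)
  define F where "F a = (1 - a / T) * sin (c * a) / c - cos (c * a) / (T * c^2)" for a
  have "(F has_real_derivative (1 - a / T) * cos (2 * pi * a * y)) (at a)" for a
    unfolding F_def using \<open>c \<noteq> 0\<close> T
    by (auto intro!: derivative_eq_intros simp: c_def field_simps power2_eq_square)
  then have "(F has_vector_derivative (1 - a / T) * cos (2 * pi * a * y)) (at a within {0..T})"
    for a
    by (simp add: has_real_derivative_iff_has_vector_derivative[symmetric]
        has_field_derivative_at_within)
  moreover have "continuous_on {0..T} (\<lambda>a. (1 - a / T) * cos (2 * pi * a * y))"
    by (intro continuous_intros) (use T in auto)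
  ultimately have "(LINT a|lborel. indicator {0..T} a *\<^sub>R ((1 - a / T) * cos (2 * pi * a * y)))
      = F T - F 0"
    using T by (intro integral_FTC_atLeastAtMost) auto
  also have "\<dots> = (1 - cos (2 * pi * y * T)) / (T * (2 * pi * y)^2)"
    unfolding F_def c_def using T by (simp add: mult_ac diff_divide_distrib)
  finally show ?thesis by (simp add: fejer_kernel_def cesaro_weight_def mult.assoc)
qed

lemma abs_fejer_kernel_le:
  assumes T: "T > 0" and y: "y \<noteq> 0"
  shows "\<bar>fejer_kernel T y\<bar> \<le> 1 / (2 * pi^2 * T * y^2)"
proof -
  have pos: "T * (2 * pi * y)^2 > 0" using T y by simp
  have "\<bar>1 - cos (2 * pi * y * T)\<bar> \<le> 2" by (smt (verit) cos_ge_minus_one cos_le_one)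
  then have "\<bar>fejer_kernel T y\<bar> \<le> 2 / (T * (2 * pi * y)^2)"
    using pos by (simp add: fejer_kernel_eq[OF T y] abs_div_pos divide_right_mono)
  also have "\<dots> = 1 / (2 * pi^2 * T * y^2)" by (simp add: power2_eq_square field_simps)
  finally show ?thesis .
qed

lemma cesaro_mean_cos_conv_eq:
  fixes \<psi> :: "real \<Rightarrow> real"
  assumes [measurable]: "\<psi> \<in> borel_measurable borel" and int: "integrable lborel \<psi>"
  shows "integrable lborel (\<lambda>a. cesaro_weight T a * cos_conv \<psi> Q a)"
    and "(LINT a|lborel. cesaro_weight T a * cos_conv \<psi> Q a)
          = (LINT x|lborel. \<psi> x * fejer_kernel T (Q - x))"
proof -
  define H where "H a x = cesaro_weight T a * (\<psi> x * cos (2 * pi * a * (Q - x)))" for a x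
  have [measurable]: "(\<lambda>(a, x). H a x) \<in> borel_measurable (lborel \<Otimes>\<^sub>M lborel)"
    unfolding H_def by measurable
  have int_cos: "integrable lborel (\<lambda>x. \<psi> x * cos (2 * pi * a * (Q - x)))" for a
    by (rule Bochner_Integration.integrable_bound[OF int]) (auto simp: abs_mult intro!: mult_left_le)
  define B where "B a = indicator {0..T} a * (LINT x|lborel. \<bar>\<psi> x\<bar>)" for a :: real
  have int_B: "integrable lborel B"
    unfolding B_def
    by (intro integrable_mult_left integrable_real_indicator) (auto simp: emeasure_lborel_Icc_eq)
  have norm_H_le: "norm (LINT x|lborel. norm (H a x)) \<le> norm (B a)" for a
  proof -
    have "norm (LINT x|lborel. norm (H a x))
        = \<bar>cesaro_weight T a\<bar> * (LINT x|lborel. \<bar>\<psi> x * cos (2 * pi * a * (Q - x))\<bar>)"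
      by (simp add: H_def abs_mult integral_nonneg_AE)
    also have "\<dots> \<le> B a"
      unfolding B_def
    proof (rule mult_mono)
      show "(LINT x|lborel. \<bar>\<psi> x * cos (2 * pi * a * (Q - x))\<bar>) \<le> (LINT x|lborel. \<bar>\<psi> x\<bar>)"
        using int_cos[of a] int
        by (intro Bochner_Integration.integral_mono integrable_abs)
          (auto simp: abs_mult intro!: mult_left_le)
    qed (auto simp: abs_cesaro_weight_le)
    also have "\<dots> \<le> norm (B a)" by simp
    finally show ?thesis .
  qed
  have int_H: "integrable (lborel \<Otimes>\<^sub>M lborel) (\<lambda>(a, x). H a x)"
  proof (rule lborel_pair.Fubini_integrable)
    show "integrable lborel (\<lambda>a. LINT x|lborel. norm (case (a, x) of (a, x) \<Rightarrow> H a x))"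
      using norm_H_le by (intro Bochner_Integration.integrable_bound[OF int_B] AE_I2) auto
    show "AE a in lborel. integrable lborel (\<lambda>x. case (a, x) of (a, x) \<Rightarrow> H a x)"
      by (simp add: H_def int_cos)
  qed simp
  have inner_x: "(LINT x|lborel. H a x) = cesaro_weight T a * cos_conv \<psi> Q a" for a
    by (simp add: H_def cos_conv_def)
  have inner_a: "(LINT a|lborel. H a x) = \<psi> x * fejer_kernel T (Q - x)" for x
    by (simp add: H_def fejer_kernel_def mult.left_commute)
  show "integrable lborel (\<lambda>a. cesaro_weight T a * cos_conv \<psi> Q a)"
    using lborel_pair.integrable_fst'[OF int_H] by (simp add: inner_x)
  show "(LINT a|lborel. cesaro_weight T a * cos_conv \<psi> Q a)
      = (LINT x|lborel. \<psi> x * fejer_kernel T (Q - x))"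
    using lborel_pair.Fubini_integral[OF int_H] by (simp add: inner_x inner_a)
qed

lemma abs_cesaro_mean_cos_conv_le:
  fixes \<psi> :: "real \<Rightarrow> real"
  assumes [measurable]: "\<psi> \<in> borel_measurable borel" and int: "integrable lborel \<psi>"
    and supp: "\<And>x. \<bar>x\<bar> > 1 \<Longrightarrow> \<psi> x = 0"
    and quadratic: "\<And>x. \<bar>\<psi> x\<bar> \<le> L * (Q - x)^2" and T: "T > 0"
  shows "\<bar>LINT a|lborel. cesaro_weight T a * cos_conv \<psi> Q a\<bar> \<le> L / (pi^2 * T)"
proof -
  have "L \<ge> 0" using quadratic[of "Q + 1"] abs_ge_zero[of "\<psi> (Q + 1)"] by simp
  have pointwise: "\<bar>\<psi> x * fejer_kernel T (Q - x)\<bar> \<le> indicator {-1..1} x * (L / (2 * pi^2 * T))"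
    for x
  proof (cases "x \<in> {-1..1} \<and> x \<noteq> Q")
    case True
    then have "(Q - x)^2 \<noteq> 0" by simp
    have "\<bar>\<psi> x * fejer_kernel T (Q - x)\<bar> = \<bar>\<psi> x\<bar> * \<bar>fejer_kernel T (Q - x)\<bar>"
      by (rule abs_mult)
    also have "\<dots> \<le> L * (Q - x)^2 * (1 / (2 * pi^2 * T * (Q - x)^2))"
      using True \<open>L \<ge> 0\<close>
      by (intro mult_mono quadratic abs_fejer_kernel_le[OF T]) auto
    also have "\<dots> = L / (2 * pi^2 * T)"
      using \<open>(Q - x)^2 \<noteq> 0\<close> by (simp add: divide_simps)
    finally show ?thesis using True by simp
  next
    case False
    have "\<psi> x = 0"
    proof (cases "x = Q")
      case True
      then show ?thesis using quadratic[of x] by simp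
    next
      case False
      then have "\<bar>x\<bar> > 1" using \<open>\<not> (x \<in> {-1..1} \<and> x \<noteq> Q)\<close> by auto
      then show ?thesis by (rule supp)
    qed
    then show ?thesis using \<open>L \<ge> 0\<close> T by simp
  qed
  have "\<bar>LINT a|lborel. cesaro_weight T a * cos_conv \<psi> Q a\<bar>
      = \<bar>LINT x|lborel. \<psi> x * fejer_kernel T (Q - x)\<bar>"
    by (simp add: cesaro_mean_cos_conv_eq(2)[OF assms(1,2)])
  also have "\<dots> \<le> (LINT x|lborel. \<bar>\<psi> x * fejer_kernel T (Q - x)\<bar>)"
    by (rule integral_abs_bound)
  also have "\<dots> \<le> (LINT x|lborel. indicator {-1..1} (x :: real) * (L / (2 * pi^2 * T)))"
  proof (rule Bochner_Integration.integral_mono')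
    show "integrable lborel (\<lambda>x::real. indicator {-1..1} x * (L / (2 * pi^2 * T)) :: real)"
      by (intro integrable_mult_left integrable_real_indicator) (auto simp: emeasure_lborel_Icc)
  qed (use pointwise \<open>L \<ge> 0\<close> T in auto)
  also have "\<dots> = L / (pi^2 * T)" by simp
  finally show ?thesis .
qed

text \<open>If \<open>h\<close> is not integrable on \<open>[0, \<infinity>)\<close>, the conclusion holds because the integral
  then has the junk value \<open>0\<close>.\<close>
lemma set_integral_eq_zero_if_cesaro_means_vanish:
  fixes h :: "real \<Rightarrow> real"
  assumes "(\<lambda>n. LINT a|lborel. cesaro_weight (real (Suc n)) a * h a) \<longlonglongrightarrow> 0"
  shows "(LINT a:{0..}|lborel. h a) = 0"
proof (cases "set_integrable lborel {0..} h")
  case True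
  define g where "g = (\<lambda>a. indicator {0..} a * h a)"
  have int: "integrable lborel g"
    using True by (simp add: set_integrable_def g_def)
  then have [measurable]: "g \<in> borel_measurable lborel"
    by (rule borel_measurable_integrable)
  have weight_g: "cesaro_weight T a * h a = cesaro_weight T a * g a" for T a
    by (simp add: cesaro_weight_def indicator_def g_def)
  have "(\<lambda>n. LINT a|lborel. cesaro_weight (real (Suc n)) a * g a) \<longlonglongrightarrow> (LINT a|lborel. g a)"
  proof (rule integral_dominated_convergence[where w = "\<lambda>a. \<bar>g a\<bar>"])
    show "AE a in lborel. (\<lambda>n. cesaro_weight (real (Suc n)) a * g a) \<longlonglongrightarrow> g a"
    proof (rule AE_I2)
      fix a
      have eq: "indicator {0..} a * g a = g a" by (simp add: g_def indicator_def)
      have "(\<lambda>n. cesaro_weight (real (Suc n)) a * g a) \<longlonglongrightarrow> indicator {0..} a * g a"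
        by (intro tendsto_mult_right cesaro_weight_tendsto)
      then show "(\<lambda>n. cesaro_weight (real (Suc n)) a * g a) \<longlonglongrightarrow> g a"
        by (simp only: eq)
    qed
    show "AE a in lborel. norm (cesaro_weight (real (Suc n)) a * g a) \<le> \<bar>g a\<bar>" for n
    proof (rule AE_I2)
      fix a
      have "\<bar>cesaro_weight (real (Suc n)) a\<bar> \<le> 1"
        using abs_cesaro_weight_le[of "real (Suc n)" a] by (simp split: split_indicator_asm)
      then show "norm (cesaro_weight (real (Suc n)) a * g a) \<le> \<bar>g a\<bar>"
        by (simp add: abs_mult mult_left_le_one_le)
    qed
  qed (use int in auto)
  with assms show ?thesis
    by (simp add: set_lebesgue_integral_def weight_g LIMSEQ_unique g_def)
qed (simp add: set_lebesgue_integral_def set_integrable_def not_integrable_integral_eq)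

lemma set_integral_sum_cos_conv_eq_zero:
  fixes \<psi> :: "real \<Rightarrow> real" and Q :: "'i \<Rightarrow> real"
  assumes [measurable]: "\<psi> \<in> borel_measurable borel" and int: "integrable lborel \<psi>"
    and supp: "\<And>x. \<bar>x\<bar> > 1 \<Longrightarrow> \<psi> x = 0"
    and quadratic: "\<And>i x. i \<in> I \<Longrightarrow> \<bar>\<psi> x\<bar> \<le> L * (Q i - x)^2"
  shows "(LINT a:{0..}|lborel. \<Sum>i\<in>I. cos_conv \<psi> (Q i) a) = 0"
proof (rule set_integral_eq_zero_if_cesaro_means_vanish)
  have "\<bar>LINT a|lborel. cesaro_weight T a * (\<Sum>i\<in>I. cos_conv \<psi> (Q i) a)\<bar>
      \<le> real (card I) * (L / pi^2) / T" if "T > 0" for T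
  proof -
    have "(LINT a|lborel. cesaro_weight T a * (\<Sum>i\<in>I. cos_conv \<psi> (Q i) a))
        = (\<Sum>i\<in>I. LINT a|lborel. cesaro_weight T a * cos_conv \<psi> (Q i) a)"
      unfolding sum_distrib_left
      by (rule Bochner_Integration.integral_sum) (rule cesaro_mean_cos_conv_eq(1)[OF assms(1,2)])
    also have "\<bar>\<dots>\<bar> \<le> (\<Sum>i\<in>I. \<bar>LINT a|lborel. cesaro_weight T a * cos_conv \<psi> (Q i) a\<bar>)"
      by (rule sum_abs)
    also have "\<dots> \<le> (\<Sum>i\<in>I. L / (pi^2 * T))"
      by (intro sum_mono abs_cesaro_mean_cos_conv_le[OF assms(1,2) supp quadratic \<open>T > 0\<close>])
    also have "\<dots> = real (card I) * (L / pi^2) / T" by simp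
    finally show ?thesis .
  qed
  then have "norm (LINT a|lborel. cesaro_weight (real (Suc n)) a * (\<Sum>i\<in>I. cos_conv \<psi> (Q i) a))
      \<le> real (card I) * (L / pi^2) * inverse (real (Suc n))" for n
    by (simp add: divide_inverse)
  moreover have "(\<lambda>n. real (card I) * (L / pi^2) * inverse (real (Suc n))) \<longlonglongrightarrow> 0"
    using tendsto_mult_right_zero[OF LIMSEQ_inverse_real_of_nat] by simp
  ultimately show "(\<lambda>n. LINT a|lborel. cesaro_weight (real (Suc n)) a
      * (\<Sum>i\<in>I. cos_conv \<psi> (Q i) a)) \<longlonglongrightarrow> 0"
    by (rule Lim_null_comparison[OF always_eventually[OF allI]])
qed

lemma Re_set_integral_eq_zero:
  fixes f :: "'a \<Rightarrow> complex"
  assumes "(LINT x:A|M. Re (f x)) = 0"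
  shows "Re (LINT x:A|M. f x) = 0"
proof (cases "set_integrable M A f")
  case True
  then have "Re (LINT x:A|M. f x) = (LINT x|M. Re (indicator A x *\<^sub>R f x))"
    unfolding set_integrable_def set_lebesgue_integral_def by (rule integral_Re[symmetric])
  also have "\<dots> = (LINT x:A|M. Re (f x))"
    by (simp add: set_lebesgue_integral_def)
  finally show ?thesis using assms by simp
qed (simp add: set_lebesgue_integral_def set_integrable_def not_integrable_integral_eq)

definition S_range :: "nat \<Rightarrow> real \<Rightarrow> real \<Rightarrow> int set" where
  "S_range d P qj = {m. P < sqrt \<bar>qj\<bar> * of_int m \<and> sqrt \<bar>qj\<bar> * of_int m < 2 * real d * P}"

lemma finite_S_range:
  assumes "qj \<noteq> 0"
  shows "finite (S_range d P qj)"
proof -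
  have "S_range d P qj \<subseteq> {\<lfloor>P / sqrt \<bar>qj\<bar>\<rfloor>..\<lceil>2 * real d * P / sqrt \<bar>qj\<bar>\<rceil>}"
  proof
    fix m assume "m \<in> S_range d P qj"
    then have "P / sqrt \<bar>qj\<bar> < of_int m" "of_int m < 2 * real d * P / sqrt \<bar>qj\<bar>"
      using assms by (auto simp: S_range_def field_simps)
    then show "m \<in> {\<lfloor>P / sqrt \<bar>qj\<bar>\<rfloor>..\<lceil>2 * real d * P / sqrt \<bar>qj\<bar>\<rceil>}"
      by (auto simp: floor_le_iff le_ceiling_iff)
  qed
  then show ?thesis by (rule finite_subset) simp
qed

lemma S_range_pos:
  assumes "0 \<le> P" "m \<in> S_range d P qj"
  shows "0 < m"
proof -
  have "0 < sqrt \<bar>qj\<bar> * of_int m" using assms by (auto simp: S_range_def)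
  then show ?thesis by (simp add: zero_less_mult_iff)
qed

lemma S_range_weighted_square_le:
  assumes "0 \<le> P" "m \<in> S_range d P qj"
  shows "\<bar>qj\<bar> * (of_int m)^2 \<le> 4 * (real d)^2 * P^2"
proof -
  have "(sqrt \<bar>qj\<bar> * of_int m)^2 \<le> (2 * real d * P)^2"
    using assms by (intro power_mono) (auto simp: S_range_def)
  then show ?thesis by (simp add: power_mult_distrib)
qed

lemma PiE_S_range_nonzero:
  assumes "0 \<le> P" "1 \<le> d" "m \<in> PiE {1..d} (\<lambda>j. S_range d P (q j))"
  shows "\<exists>j\<in>{1..d}. m j \<noteq> 0"
proof -
  have "m 1 \<in> S_range d P (q 1)" using assms(2,3) by auto
  then have "0 < m 1" using S_range_pos[OF assms(1)] by blast
  then show ?thesis using assms(2) by force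
qed

lemma sum_weighted_square_le_PiE_S_range:
  assumes "0 \<le> P" "m \<in> PiE {1..d} (\<lambda>j. S_range d P (q j))"
  shows "(\<Sum>j=1..d. \<bar>q j\<bar> * (of_int (m j))^2) \<le> 4 * (real d)^3 * P^2"
proof -
  have "(\<Sum>j=1..d. \<bar>q j\<bar> * (of_int (m j))^2) \<le> real (card {1..d}) * (4 * (real d)^2 * P^2)"
    using assms by (intro sum_bounded_above S_range_weighted_square_le) auto
  then show ?thesis by (simp add: power2_eq_square power3_eq_cube)
qed

lemma prod_S_sum_eq_sum_PiE:
  assumes "finite I" "\<And>j. j \<in> I \<Longrightarrow> q j \<noteq> 0"
  shows "(\<Prod>j\<in>I. S_sum d P (q j) \<alpha>)
    = (\<Sum>m\<in>PiE I (\<lambda>j. S_range d P (q j)). ee (\<alpha> * (\<Sum>j\<in>I. q j * (of_int (m j))^2)))"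
proof -
  have "(\<Prod>j\<in>I. S_sum d P (q j) \<alpha>) = (\<Prod>j\<in>I. \<Sum>m\<in>S_range d P (q j). ee (\<alpha> * q j * (of_int m)^2))"
    by (simp add: S_sum_def S_range_def)
  also have "\<dots> = (\<Sum>m\<in>PiE I (\<lambda>j. S_range d P (q j)). \<Prod>j\<in>I. ee (\<alpha> * q j * (of_int (m j))^2))"
    using assms by (intro prod_sum_PiE finite_S_range)
  also have "\<dots> = (\<Sum>m\<in>PiE I (\<lambda>j. S_range d P (q j)). ee (\<alpha> * (\<Sum>j\<in>I. q j * (of_int (m j))^2)))"
    using assms by (simp add: prod_ee sum_distrib_left mult.assoc)
  finally show ?thesis .
qed

lemma Re_prod_S_sum_mult_fourier:
  fixes \<psi> :: "real \<Rightarrow> real"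
  assumes "finite I" "\<And>j. j \<in> I \<Longrightarrow> q j \<noteq> 0"
    and "\<psi> \<in> borel_measurable borel" "integrable lborel \<psi>"
  shows "Re ((\<Prod>j\<in>I. S_sum d P (q j) \<alpha>) * fourier \<psi> \<alpha>)
    = (\<Sum>m\<in>PiE I (\<lambda>j. S_range d P (q j)). cos_conv \<psi> (\<Sum>j\<in>I. q j * (of_int (m j))^2) \<alpha>)"
  by (simp only: prod_S_sum_eq_sum_PiE[OF assms(1,2)] sum_distrib_right Re_sum
      Re_ee_mult_fourier[OF assms(3,4)])

theorem lemma2p2:
  fixes d :: nat and q :: "nat \<Rightarrow> real" and C :: real and \<psi> :: "real \<Rightarrow> real"
  assumes d5: "d \<ge> 5"
    and q_nz: "\<forall>j\<in>{1..d}. q j \<noteq> 0"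
    and q_big: "\<forall>j\<in>{1..d}. \<bar>q j\<bar> \<ge> exp (exp 1)"
    and sig: "npos d q \<ge> 1" "nneg d q \<ge> 1"
    and C_ge: "C \<ge> 1"
    and \<psi>_smooth: "smooth_fun \<psi>"
    and \<psi>_sym: "\<forall>x. \<psi> (- x) = \<psi> x"
    and \<psi>_nonneg: "\<forall>x. \<psi> x \<ge> 0"
    and \<psi>_int: "integrable lborel \<psi>"
    and \<psi>_one: "(LINT x|lborel. \<psi> x) = 1"
    and \<psi>_supp: "\<forall>x. \<bar>x\<bar> > 1 \<longrightarrow> \<psi> x = 0"
    and nosol: "\<not> (\<exists>m :: nat \<Rightarrow> int. (\<exists>j\<in>{1..d}. m j \<noteq> 0)
                   \<and> \<bar>\<Sum>j=1..d. q j * (of_int (m j))^2\<bar> < 1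
                   \<and> (\<Sum>j=1..d. \<bar>q j\<bar> * (of_int (m j))^2) \<le> 4 * (real d)^3 * (P_par d C q)^2)"
  shows "Re (LINT \<alpha>:{0..}|lborel.
            (\<Prod>j=1..d. S_sum d (P_par d C q) (q j) \<alpha>) * fourier \<psi> \<alpha>) = 0"
proof -
  define P where "P = P_par d C q"
  define M where "M = PiE {1..d} (\<lambda>j. S_range d P (q j))"
  define Qf where "Qf m = (\<Sum>j=1..d. q j * (of_int (m j))^2)" for m :: "nat \<Rightarrow> int"
  have "P > 0" by (simp add: P_def P_par_def Let_def)
  have Qf_ge: "\<bar>Qf m\<bar> \<ge> 1" if "m \<in> M" for m
  proof -
    have "\<exists>j\<in>{1..d}. m j \<noteq> 0"
      using PiE_S_range_nonzero[of P d m q] \<open>P > 0\<close> d5 that by (simp add: M_def)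
    moreover have "(\<Sum>j=1..d. \<bar>q j\<bar> * (of_int (m j))^2) \<le> 4 * (real d)^3 * (P_par d C q)^2"
      using sum_weighted_square_le_PiE_S_range[of P m] \<open>P > 0\<close> that by (simp add: M_def P_def)
    ultimately show ?thesis using nosol unfolding Qf_def by fastforce
  qed
  obtain L where \<psi>_quadratic: "\<And>Q x. \<bar>Q\<bar> \<ge> 1 \<Longrightarrow> \<bar>\<psi> x\<bar> \<le> L * (Q - x)^2"
    using smooth_bump_le_quadratic \<psi>_smooth \<psi>_sym \<psi>_nonneg \<psi>_supp by metis
  have \<psi>_measurable: "\<psi> \<in> borel_measurable borel"
    using \<psi>_smooth by (rule smooth_fun_borel_measurable)
  have Re_integrand: "Re ((\<Prod>j=1..d. S_sum d P (q j) \<alpha>) * fourier \<psi> \<alpha>)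
      = (\<Sum>m\<in>M. cos_conv \<psi> (Qf m) \<alpha>)" for \<alpha>
    unfolding M_def Qf_def using q_nz
    by (intro Re_prod_S_sum_mult_fourier \<psi>_measurable \<psi>_int) auto
  have "(LINT \<alpha>:{0..}|lborel. \<Sum>m\<in>M. cos_conv \<psi> (Qf m) \<alpha>) = 0"
    using \<psi>_supp \<psi>_quadratic Qf_ge
    by (intro set_integral_sum_cos_conv_eq_zero[OF \<psi>_measurable \<psi>_int]) auto
  then show ?thesis
    unfolding P_def[symmetric]
    by (intro Re_set_integral_eq_zero) (simp only: Re_integrand)
qed

end
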